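(* Let $N$ be a positive integer and let $\psi(x)=a_1x^k+\cdots+a_kx$ be a polynomial with integer coefficients with $|a_1|,\ldots,|a_k|\le\log N$. Then for any $\theta\in\mathbb{T}$, $$\sum_{x=1}^N\psi^{\Delta}(x-1)e(\theta\psi(x))=\sum_{x=1}^{\psi(N)}e(\theta x)+O\big(\theta\,\psi(N)\psi^{\Delta}(N)\big),$$ where the implied constant depends only on $k$.
   Context: $\mathbb{T}=\mathbb{R}/\mathbb{Z}$ (in the error term $\theta$ denotes a real representative), $e(x)=e^{2\pi\sqrt{-1}x}$, and for a function $f$ on $\mathbb{Z}$, $f^{\Delta}(x)=f(x+1)-f(x)$. *)

theory Defs
  imports "HOL-Analysis.Analysis"
begin

definition e :: "real \<Rightarrow> complex" where
  "e x = exp (2 * pi * \<i> * complex_of_real x)"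

definition fdiff :: "(int \<Rightarrow> int) \<Rightarrow> int \<Rightarrow> int" where
  "fdiff f x = f (x + 1) - f x"

definition psi_poly :: "nat \<Rightarrow> (nat \<Rightarrow> int) \<Rightarrow> int \<Rightarrow> int" where
  "psi_poly k a x = (\<Sum>i=1..k. a i * x ^ (k + 1 - i))"

text \<open>Sum from x = 1 to M, with the standard signed convention
  sum_{x=1}^M f x = - sum_{x=M+1}^0 f x when M < 0 (empty sum when M = 0).\<close>
definition sum_upto :: "(int \<Rightarrow> complex) \<Rightarrow> int \<Rightarrow> complex" where
  "sum_upto f M = (if 0 \<le> M then (\<Sum>x\<in>{1..M}. f x) else - (\<Sum>x\<in>{M+1..0}. f x))"

end

theory Submission
  imports Defs
begin

text \<open>The x-th term \<open>\<psi>\<^sup>\<Delta>(x-1) e(\<theta>\<psi>(x))\<close> stands in for the block of the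
  \<open>\<psi>\<^sup>\<Delta>(x-1)\<close> terms \<open>e(\<theta>y)\<close> with \<open>\<psi>(x-1) < y \<le> \<psi>(x)\<close>, each replaced by its value at
  the right end point; since \<open>e\<close> is \<open>2\<pi>\<close>-Lipschitz, this costs at most
  \<open>2\<pi>|\<theta>| \<psi>\<^sup>\<Delta>(x-1)^2\<close> per block. It remains to bound \<open>\<Sum>\<^sub>x \<psi>\<^sup>\<Delta>(x-1)^2\<close> by
  \<open>|\<psi>(N)| |\<psi>\<^sup>\<Delta>(N)|\<close>. The coefficients are integers of size at most \<open>log N\<close>, so a
  nonzero top coefficient \<open>c\<close>, of degree \<open>d\<close> say, forces \<open>N \<ge> 3\<close> and dominates all
  lower terms: \<open>|\<psi>(N)| \<ge> 2/5 |c| N^d\<close> and \<open>|\<psi>\<^sup>\<Delta>(N)| \<ge> 1/2 |c| N^(d-1)\<close>, while every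
  increment is at most \<open>d^2 |c| N^(d-1)\<close>.\<close>

lemma norm_e_diff_le: "norm (e a - e b) \<le> 2 * pi * \<bar>a - b\<bar>"
proof -
  define t where "t = 2 * pi * (a - b)"
  have "e a - e b = e b * (exp (\<i> * of_real t) - 1)"
    by (simp add: e_def t_def exp_add[symmetric] algebra_simps)
  then have "norm (e a - e b) = 2 * \<bar>sin (t / 2)\<bar>"
    by (simp add: norm_mult dist_exp_i_1 e_def)
  also have "\<dots> \<le> \<bar>t\<bar>"
    using abs_sin_x_le_abs_x[of "t / 2"] by simp
  finally show ?thesis
    by (simp add: t_def abs_mult)
qed

lemma sum_upto_Suc: "sum_upto f (M + 1) = sum_upto f M + f (M + 1)"
proof -
  consider "0 \<le> M" | "M = -1" | "M < -1" by linarith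
  then show ?thesis
  proof cases
    case 1
    then have "{1..M + 1} = insert (M + 1) {1..M}" by auto
    with 1 show ?thesis by (simp add: sum_upto_def)
  next
    case 2
    then show ?thesis by (simp add: sum_upto_def)
  next
    case 3
    then have "{M + 1..0} = insert (M + 1) {M + 2..0}" by auto
    with 3 show ?thesis by (simp add: sum_upto_def add.assoc)
  qed
qed

lemma sum_upto_diff:
  assumes "M \<le> M'"
  shows "sum_upto f M' - sum_upto f M = (\<Sum>y\<in>{M + 1..M'}. f y)"
  using assms
proof (induction M' rule: int_ge_induct)
  case base
  then show ?case by simp
next
  case (step i)
  then have "{M + 1..i + 1} = insert (i + 1) {M + 1..i}" by auto
  with step show ?case by (simp add: sum_upto_Suc)
qed

lemma sum_interval_approx_const:
  fixes f :: "int \<Rightarrow> complex"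
  assumes "A \<le> p" "p \<le> B"
    and lip: "\<And>y z. norm (f y - f z) \<le> K * \<bar>real_of_int (y - z)\<bar>"
  shows "norm (of_int (B - A) * f p - (\<Sum>y\<in>{A + 1..B}. f y)) \<le> K * (real_of_int (B - A))\<^sup>2"
proof -
  have card: "card {A + 1..B} = nat (B - A)" by simp
  have "of_int (B - A) * f p - (\<Sum>y\<in>{A + 1..B}. f y) = (\<Sum>y\<in>{A + 1..B}. f p - f y)"
    using assms(1,2) card by (simp add: sum_subtractf)
  then have "norm (of_int (B - A) * f p - (\<Sum>y\<in>{A + 1..B}. f y)) \<le> (\<Sum>y\<in>{A + 1..B}. norm (f p - f y))"
    by (simp add: norm_sum)
  also have "\<dots> \<le> (\<Sum>y\<in>{A + 1..B}. K * real_of_int (B - A))"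
  proof (rule sum_mono)
    fix y assume "y \<in> {A + 1..B}"
    with assms(1,2) have "\<bar>real_of_int (p - y)\<bar> \<le> real_of_int (B - A)" by auto
    moreover have "0 \<le> K"
      using order_trans[OF norm_ge_zero lip[of 1 0]] by simp
    ultimately show "norm (f p - f y) \<le> K * real_of_int (B - A)"
      using lip[of p y] by (meson mult_left_mono order_trans)
  qed
  also have "\<dots> = K * (real_of_int (B - A))\<^sup>2"
    using assms(1,2) card by (simp add: power2_eq_square)
  finally show ?thesis .
qed

lemma sum_upto_diff_approx:
  fixes f :: "int \<Rightarrow> complex"
  assumes lip: "\<And>y z. norm (f y - f z) \<le> K * \<bar>real_of_int (y - z)\<bar>"
  shows "norm (of_int (M' - M) * f M' - (sum_upto f M' - sum_upto f M)) \<le> K * (real_of_int (M' - M))\<^sup>2"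
proof (cases "M \<le> M'")
  case True
  then show ?thesis
    using sum_interval_approx_const[of M M' M', OF _ _ lip] by (simp add: sum_upto_diff)
next
  case False
  then have "of_int (M' - M) * f M' - (sum_upto f M' - sum_upto f M)
      = - (of_int (M - M') * f M' - (\<Sum>y\<in>{M' + 1..M}. f y))"
    using sum_upto_diff[of M' M f] by (simp add: algebra_simps)
  moreover have "(real_of_int (M' - M))\<^sup>2 = (real_of_int (M - M'))\<^sup>2"
    by (simp add: power2_commute)
  ultimately show ?thesis
    using False sum_interval_approx_const[of M' M' M, OF _ _ lip] by (simp only: norm_minus_cancel)
qed

lemma weighted_sum_approx_sum_upto:
  fixes \<psi> :: "int \<Rightarrow> int" and f :: "int \<Rightarrow> complex"
  assumes "\<psi> 0 = 0"
    and lip: "\<And>y z. norm (f y - f z) \<le> K * \<bar>real_of_int (y - z)\<bar>"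
  shows "norm ((\<Sum>x\<in>{1..int N}. of_int (fdiff \<psi> (x - 1)) * f (\<psi> x)) - sum_upto f (\<psi> (int N)))
    \<le> K * (\<Sum>x\<in>{1..int N}. (real_of_int (fdiff \<psi> (x - 1)))\<^sup>2)"
proof (induction N)
  case 0
  then show ?case using assms(1) by (simp add: sum_upto_def)
next
  case (Suc n)
  let ?x = "int n + 1"
  have ivl: "{1..int (Suc n)} = insert ?x {1..int n}" by auto
  have "(\<Sum>x\<in>{1..int (Suc n)}. of_int (fdiff \<psi> (x - 1)) * f (\<psi> x)) - sum_upto f (\<psi> (int (Suc n)))
      = ((\<Sum>x\<in>{1..int n}. of_int (fdiff \<psi> (x - 1)) * f (\<psi> x)) - sum_upto f (\<psi> (int n)))
        + (of_int (\<psi> ?x - \<psi> (int n)) * f (\<psi> ?x) - (sum_upto f (\<psi> ?x) - sum_upto f (\<psi> (int n))))"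
    unfolding ivl by (simp add: fdiff_def add.commute)
  also have "norm \<dots> \<le> K * (\<Sum>x\<in>{1..int n}. (real_of_int (fdiff \<psi> (x - 1)))\<^sup>2)
      + K * (real_of_int (\<psi> ?x - \<psi> (int n)))\<^sup>2"
    by (rule norm_triangle_le[OF add_mono[OF Suc.IH sum_upto_diff_approx[OF lip]]])
  also have "\<dots> = K * (\<Sum>x\<in>{1..int (Suc n)}. (real_of_int (fdiff \<psi> (x - 1)))\<^sup>2)"
    unfolding ivl by (simp add: fdiff_def distrib_left)
  finally show ?case .
qed

lemma power_succ_diff_le:
  fixes t X :: real
  assumes "0 \<le> t" "t + 1 \<le> X"
  shows "(t + 1) ^ j - t ^ j \<le> real j * X ^ (j - 1)"
proof (cases j)
  case 0
  then show ?thesis by simp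
next
  case (Suc m)
  have "(t + 1) ^ Suc m - t ^ Suc m = (\<Sum>p<Suc m. (t + 1) ^ p * t ^ (m - p))"
    using diff_power_eq_sum[of "t + 1" m t] by simp
  also have "\<dots> \<le> (\<Sum>p<Suc m. X ^ p * X ^ (m - p))"
    using assms by (intro sum_mono mult_mono power_mono) auto
  also have "\<dots> = (\<Sum>p<Suc m. X ^ m)"
    by (intro sum.cong) (auto simp: power_add[symmetric])
  finally show ?thesis
    using Suc by simp
qed

lemma dominant_poly_increment_le:
  fixes c :: "nat \<Rightarrow> real" and X t L :: real
  assumes cL: "\<And>j. j \<in> {1..d} \<Longrightarrow> \<bar>c j\<bar> \<le> L" and cd: "1 \<le> \<bar>c d\<bar>"
    and X: "1 \<le> X" "L \<le> X" and t: "0 \<le> t" "t + 1 \<le> X"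
  shows "\<bar>\<Sum>j=1..d. c j * ((t + 1) ^ j - t ^ j)\<bar> \<le> real d ^ 2 * \<bar>c d\<bar> * X ^ (d - 1)"
proof -
  have "\<bar>\<Sum>j=1..d. c j * ((t + 1) ^ j - t ^ j)\<bar> \<le> (\<Sum>j=1..d. \<bar>c j\<bar> * ((t + 1) ^ j - t ^ j))"
    using t by (intro order_trans[OF sum_abs] sum_mono) (simp add: abs_mult power_mono)
  also have "\<dots> \<le> (\<Sum>j=1..d. real d * \<bar>c d\<bar> * X ^ (d - 1))"
  proof (rule sum_mono)
    fix j assume j: "j \<in> {1..d}"
    have "\<bar>c j\<bar> * ((t + 1) ^ j - t ^ j) \<le> \<bar>c j\<bar> * (real j * X ^ (j - 1))"
      using power_succ_diff_le[OF t] by (simp add: mult_left_mono)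
    also have "\<dots> \<le> real d * \<bar>c d\<bar> * X ^ (d - 1)"
    proof (cases "j = d")
      case True
      then show ?thesis by (simp add: mult_ac)
    next
      case False
      with j have "j \<le> d - 1" by auto
      have "\<bar>c j\<bar> * (real j * X ^ (j - 1)) \<le> X * (real j * X ^ (j - 1))"
        using cL[OF j] X by (intro mult_right_mono) auto
      also have "\<dots> = real j * X ^ j"
        using j by (cases j) auto
      also have "\<dots> \<le> real d * X ^ (d - 1)"
        using \<open>j \<le> d - 1\<close> j X by (intro mult_mono power_increasing) auto
      also have "\<dots> \<le> real d * \<bar>c d\<bar> * X ^ (d - 1)"
        using mult_right_mono[OF cd, of "real d * X ^ (d - 1)"] X by (simp add: mult_ac)
      finally show ?thesis .
    qed
    finally show "\<bar>c j\<bar> * ((t + 1) ^ j - t ^ j) \<le> real d * \<bar>c d\<bar> * X ^ (d - 1)" .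
  qed
  also have "\<dots> = real d ^ 2 * \<bar>c d\<bar> * X ^ (d - 1)"
    by (simp add: power2_eq_square)
  finally show ?thesis .
qed

lemma geometric_sum_le:
  fixes X :: real
  assumes "1 \<le> X"
  shows "(X - 1) * (\<Sum>j\<in>{1..<d}. X ^ j) \<le> X ^ d"
proof (induction d)
  case 0
  then show ?case by simp
next
  case (Suc d)
  have "(X - 1) * (\<Sum>j\<in>{1..<Suc d}. X ^ j) \<le> (X - 1) * (\<Sum>j\<in>{1..<d}. X ^ j) + (X - 1) * X ^ d"
    using assms by (simp add: distrib_left)
  also have "\<dots> \<le> X ^ Suc d"
    using Suc assms by (simp add: algebra_simps)
  finally show ?case .
qed

lemma dominant_poly_ge:
  fixes c :: "nat \<Rightarrow> real" and X L :: real
  assumes d: "1 \<le> d" and cL: "\<And>j. j \<in> {1..d} \<Longrightarrow> \<bar>c j\<bar> \<le> L" and cd: "1 \<le> \<bar>c d\<bar>"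
    and X: "1 \<le> X" "L \<le> 3/5 * (X - 1)"
  shows "2/5 * \<bar>c d\<bar> * X ^ d \<le> \<bar>\<Sum>j=1..d. c j * X ^ j\<bar>"
proof -
  have "\<bar>\<Sum>j\<in>{1..<d}. c j * X ^ j\<bar> \<le> (\<Sum>j\<in>{1..<d}. L * X ^ j)"
    using cL X by (intro order_trans[OF sum_abs] sum_mono) (auto simp: abs_mult intro!: mult_right_mono)
  also have "\<dots> = L * (\<Sum>j\<in>{1..<d}. X ^ j)"
    by (simp add: sum_distrib_left)
  also have "\<dots> \<le> 3/5 * (X - 1) * (\<Sum>j\<in>{1..<d}. X ^ j)"
    using X by (intro mult_right_mono sum_nonneg) auto
  also have "\<dots> \<le> 3/5 * X ^ d"
    using mult_left_mono[OF geometric_sum_le[OF X(1), of d], of "3/5"] by (simp only: mult.assoc)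
  also have "\<dots> \<le> 3/5 * (\<bar>c d\<bar> * X ^ d)"
    using mult_right_mono[OF cd, of "X ^ d"] X by simp
  finally have "\<bar>\<Sum>j\<in>{1..<d}. c j * X ^ j\<bar> \<le> 3/5 * (\<bar>c d\<bar> * X ^ d)" .
  moreover have "\<bar>c d * X ^ d\<bar> = \<bar>c d\<bar> * X ^ d"
    using X by (simp add: abs_mult)
  ultimately show ?thesis
    using sum.last_plus[OF d, of "\<lambda>j. c j * X ^ j"] by linarith
qed

lemma power_succ_diff_sum_le:
  fixes X :: real
  assumes "0 \<le> X"
  shows "X * (\<Sum>j\<in>{1..<d}. (X + 1) ^ j - X ^ j) \<le> (X + 1) ^ d - X ^ d"
proof (induction d)
  case 0
  then show ?case by simp
next
  case (Suc d)
  have "X * (\<Sum>j\<in>{1..<Suc d}. (X + 1) ^ j - X ^ j)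
      \<le> X * (\<Sum>j\<in>{1..<d}. (X + 1) ^ j - X ^ j) + X * ((X + 1) ^ d - X ^ d)"
    by (simp add: distrib_left)
  also have "\<dots> \<le> (X + 1) * ((X + 1) ^ d - X ^ d)"
    using Suc by (simp add: algebra_simps)
  also have "\<dots> \<le> (X + 1) ^ Suc d - X ^ Suc d"
    using assms by (simp add: algebra_simps)
  finally show ?case .
qed

lemma dominant_poly_increment_ge:
  fixes c :: "nat \<Rightarrow> real" and X L :: real
  assumes d: "1 \<le> d" and cL: "\<And>j. j \<in> {1..d} \<Longrightarrow> \<bar>c j\<bar> \<le> L" and cd: "1 \<le> \<bar>c d\<bar>"
    and X: "1 \<le> X" "L \<le> X / 2"
  shows "1/2 * \<bar>c d\<bar> * X ^ (d - 1) \<le> \<bar>\<Sum>j=1..d. c j * ((X + 1) ^ j - X ^ j)\<bar>"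
proof -
  define w where "w j = (X + 1) ^ j - X ^ j" for j
  have w0: "0 \<le> w j" for j
    unfolding w_def using X by (simp add: power_mono)
  have "\<bar>\<Sum>j\<in>{1..<d}. c j * w j\<bar> \<le> (\<Sum>j\<in>{1..<d}. L * w j)"
    using cL w0 by (intro order_trans[OF sum_abs] sum_mono) (auto simp: abs_mult intro!: mult_right_mono)
  also have "\<dots> = L * (\<Sum>j\<in>{1..<d}. w j)"
    by (simp add: sum_distrib_left)
  also have "\<dots> \<le> X / 2 * (\<Sum>j\<in>{1..<d}. w j)"
    using mult_right_mono[OF X(2), of "\<Sum>j\<in>{1..<d}. w j"] w0 by (simp add: sum_nonneg)
  also have "\<dots> \<le> \<bar>c d\<bar> * w d / 2"
    using power_succ_diff_sum_le[of X d] X cd mult_right_mono[OF cd w0[of d]] unfolding w_def by simp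
  finally have "\<bar>\<Sum>j\<in>{1..<d}. c j * w j\<bar> \<le> \<bar>c d\<bar> * w d / 2" .
  moreover have "\<bar>c d * w d\<bar> = \<bar>c d\<bar> * w d"
    using w0 by (simp add: abs_mult)
  ultimately have top: "\<bar>c d\<bar> * w d / 2 \<le> \<bar>\<Sum>j=1..d. c j * w j\<bar>"
    using sum.last_plus[OF d, of "\<lambda>j. c j * w j"] by linarith
  have "X ^ (d - 1) \<le> w d"
  proof -
    obtain m where m: "d = Suc m" using d by (cases d) auto
    have "X ^ m \<le> (X + 1) ^ m"
      using X by (intro power_mono) auto
    moreover have "X * X ^ m \<le> X * (X + 1) ^ m"
      using calculation X by (intro mult_left_mono) auto
    moreover have "w d = (X + 1) ^ m + X * (X + 1) ^ m - X * X ^ m"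
      unfolding w_def m by (simp add: algebra_simps)
    ultimately have "X ^ m \<le> w d"
      by linarith
    then show ?thesis
      using m by (metis diff_Suc_1)
  qed
  then have "1/2 * \<bar>c d\<bar> * X ^ (d - 1) \<le> \<bar>c d\<bar> * w d / 2"
    by (simp add: mult_left_mono)
  with top show ?thesis
    unfolding w_def by linarith
qed

lemma ln_le_half_and_three_fifths:
  fixes X :: real
  assumes "3 \<le> X"
  shows "ln X \<le> X / 2" "ln X \<le> 3/5 * (X - 1)"
proof -
  have "ln X - ln 2 = ln (X / 2)"
    using assms by (simp add: ln_div)
  also have "\<dots> \<le> X / 2 - 1"
    using assms by (intro ln_le_minus_one) auto
  finally have "ln X \<le> X / 2 - 1 + 25/36"
    using ln2_le_25_over_36 by linarith
  moreover have "3/5 * (X - 1) = 3/5 * X - 3/5"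
    by (simp add: right_diff_distrib)
  ultimately show "ln X \<le> X / 2" "ln X \<le> 3/5 * (X - 1)"
    using assms by linarith+
qed

lemma sum_squared_poly_increments_le:
  fixes c :: "nat \<Rightarrow> real" and N :: nat
  assumes d: "1 \<le> d" and cL: "\<And>j. j \<in> {1..d} \<Longrightarrow> \<bar>c j\<bar> \<le> ln (real N)" and cd: "1 \<le> \<bar>c d\<bar>"
  defines "P \<equiv> \<lambda>y. \<Sum>j=1..d. c j * y ^ j"
  shows "(\<Sum>x\<in>{1..int N}. (P (of_int x) - P (of_int x - 1))\<^sup>2)
    \<le> 5 * real d ^ 4 * \<bar>P (real N)\<bar> * \<bar>P (real N + 1) - P (real N)\<bar>"
proof -
  define X where "X = real N"
  have X3: "3 \<le> X"
  proof (rule ccontr)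
    assume "\<not> 3 \<le> X"
    then have "N = 0 \<or> N = 1 \<or> N = 2"
      unfolding X_def by linarith
    then have "ln (real N) < 1"
      using ln_2_less_1 by auto
    then show False
      using cL[of d] cd d by simp
  qed
  note ln_X = ln_le_half_and_three_fifths[OF X3]
  have cX: "\<And>j. j \<in> {1..d} \<Longrightarrow> \<bar>c j\<bar> \<le> ln X"
    using cL unfolding X_def .
  have increment: "P (t + 1) - P t = (\<Sum>j=1..d. c j * ((t + 1) ^ j - t ^ j))" for t
    unfolding P_def by (simp add: sum_subtractf right_diff_distrib)
  define B where "B = real d ^ 2 * \<bar>c d\<bar> * X ^ (d - 1)"
  have "(P (of_int x) - P (of_int x - 1))\<^sup>2 \<le> B\<^sup>2" if "x \<in> {1..int N}" for x
  proof -
    have "\<bar>P (of_int (x - 1) + 1) - P (of_int (x - 1))\<bar> \<le> B"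
      unfolding increment B_def
      using that ln_X X3 unfolding X_def
      by (intro dominant_poly_increment_le[of d c "ln X", OF cX cd]) (auto simp: X_def)
    then show ?thesis
      by (simp add: abs_le_square_iff[symmetric])
  qed
  then have "(\<Sum>x\<in>{1..int N}. (P (of_int x) - P (of_int x - 1))\<^sup>2) \<le> (\<Sum>x\<in>{1..int N}. B\<^sup>2)"
    by (rule sum_mono)
  also have "\<dots> = X * B\<^sup>2"
    unfolding X_def by simp
  also have "\<dots> = 5 * real d ^ 4 * ((2/5 * \<bar>c d\<bar> * X ^ d) * (1/2 * \<bar>c d\<bar> * X ^ (d - 1)))"
    using d unfolding B_def by (cases d) (simp_all add: power2_eq_square power4_eq_xxxx algebra_simps)
  also have "\<dots> \<le> 5 * real d ^ 4 * (\<bar>P X\<bar> * \<bar>P (X + 1) - P X\<bar>)"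
  proof (intro mult_left_mono mult_mono)
    show "2/5 * \<bar>c d\<bar> * X ^ d \<le> \<bar>P X\<bar>"
      unfolding P_def using X3 ln_X by (intro dominant_poly_ge[of d c "ln X", OF d cX cd]) auto
    show "1/2 * \<bar>c d\<bar> * X ^ (d - 1) \<le> \<bar>P (X + 1) - P X\<bar>"
      unfolding increment using X3 ln_X by (intro dominant_poly_increment_ge[of d c "ln X", OF d cX cd]) auto
  qed (use X3 in auto)
  finally show ?thesis
    unfolding X_def by (simp add: mult_ac)
qed

lemma psi_poly_reindex: "psi_poly k a x = (\<Sum>j=1..k. a (k + 1 - j) * x ^ j)"
  unfolding psi_poly_def
  by (rule sum.reindex_bij_witness[of _ "\<lambda>j. k + 1 - j" "\<lambda>j. k + 1 - j"]) auto

lemma psi_poly_top_degree: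
  assumes "\<exists>j\<in>{1..k}. a (k + 1 - j) \<noteq> 0"
  obtains d where "d \<in> {1..k}" "a (k + 1 - d) \<noteq> 0"
    "\<And>x. psi_poly k a x = (\<Sum>j=1..d. a (k + 1 - j) * x ^ j)"
proof -
  define D where "D = {j\<in>{1..k}. a (k + 1 - j) \<noteq> 0}"
  have memD: "j \<in> D \<longleftrightarrow> j \<in> {1..k} \<and> a (k + 1 - j) \<noteq> 0" for j
    unfolding D_def by simp
  have "finite D"
    unfolding D_def by simp
  moreover have "D \<noteq> {}"
    using assms memD by auto
  ultimately have d: "Max D \<in> D" and top: "\<And>j. j \<in> D \<Longrightarrow> j \<le> Max D"
    by auto
  have "psi_poly k a x = (\<Sum>j=1..Max D. a (k + 1 - j) * x ^ j)" for x
    unfolding psi_poly_reindex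
  proof (rule sum.mono_neutral_right)
    show "{1..Max D} \<subseteq> {1..k}"
      using d memD by auto
    show "\<forall>j\<in>{1..k} - {1..Max D}. a (k + 1 - j) * x ^ j = 0"
    proof
      fix j assume j: "j \<in> {1..k} - {1..Max D}"
      then have "Max D < j"
        by auto
      then have "j \<notin> D"
        using top leD by blast
      with j show "a (k + 1 - j) * x ^ j = 0"
        using memD by simp
    qed
  qed simp
  with d memD show thesis
    by (intro that) auto
qed

lemma sum_squared_fdiff_psi_poly_le:
  fixes N :: nat and a :: "nat \<Rightarrow> int"
  assumes "\<forall>i\<in>{1..k}. \<bar>real_of_int (a i)\<bar> \<le> ln (real N)"
  shows "(\<Sum>x\<in>{1..int N}. (real_of_int (fdiff (psi_poly k a) (x - 1)))\<^sup>2)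
    \<le> 5 * real k ^ 4 * \<bar>real_of_int (psi_poly k a (int N))\<bar> * \<bar>real_of_int (fdiff (psi_poly k a) (int N))\<bar>"
proof (cases "\<forall>j\<in>{1..k}. a (k + 1 - j) = 0")
  case True
  then have "psi_poly k a x = 0" for x
    unfolding psi_poly_reindex by simp
  then show ?thesis
    by (simp add: fdiff_def)
next
  case False
  obtain d where d: "d \<in> {1..k}" "a (k + 1 - d) \<noteq> 0"
    and psi: "\<And>x. psi_poly k a x = (\<Sum>j=1..d. a (k + 1 - j) * x ^ j)"
    by (rule psi_poly_top_degree) (use False in auto)
  define c where "c j = real_of_int (a (k + 1 - j))" for j
  define P where "P y = (\<Sum>j=1..d. c j * y ^ j)" for y
  have psi_P: "real_of_int (psi_poly k a x) = P (of_int x)" for x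
    unfolding psi P_def c_def by simp
  have "(\<Sum>x\<in>{1..int N}. (P (of_int x) - P (of_int x - 1))\<^sup>2)
      \<le> 5 * real d ^ 4 * \<bar>P (real N)\<bar> * \<bar>P (real N + 1) - P (real N)\<bar>"
    unfolding P_def
  proof (rule sum_squared_poly_increments_le)
    show "\<bar>c j\<bar> \<le> ln (real N)" if "j \<in> {1..d}" for j
    proof -
      have "k + 1 - j \<in> {1..k}"
        using that d(1) by auto
      then show ?thesis
        using assms unfolding c_def by blast
    qed
    show "1 \<le> \<bar>c d\<bar>"
      using d(2) unfolding c_def by linarith
  qed (use d in auto)
  also have "\<dots> \<le> 5 * real k ^ 4 * \<bar>P (real N)\<bar> * \<bar>P (real N + 1) - P (real N)\<bar>"
    using d(1) by (intro mult_right_mono power_mono) auto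
  finally show ?thesis
    unfolding fdiff_def of_int_diff psi_P by simp
qed

lemma norm_e_mult_of_int_diff_le:
  "norm (e (\<theta> * of_int y) - e (\<theta> * of_int z)) \<le> 2 * pi * \<bar>\<theta>\<bar> * \<bar>real_of_int (y - z)\<bar>"
proof -
  have "\<bar>\<theta> * of_int y - \<theta> * of_int z\<bar> = \<bar>\<theta>\<bar> * \<bar>real_of_int (y - z)\<bar>"
    by (simp add: abs_mult[symmetric] right_diff_distrib)
  then show ?thesis
    using norm_e_diff_le[of "\<theta> * of_int y" "\<theta> * of_int z"] by (simp add: mult_ac)
qed

lemma psi_poly_weighted_e_sum_approx:
  assumes "\<forall>i\<in>{1..k}. \<bar>real_of_int (a i)\<bar> \<le> ln (real N)"
  shows "norm ((\<Sum>x\<in>{1..int N}. of_int (fdiff (psi_poly k a) (x - 1)) * e (\<theta> * of_int (psi_poly k a x)))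
      - sum_upto (\<lambda>y. e (\<theta> * of_int y)) (psi_poly k a (int N)))
    \<le> 10 * pi * real k ^ 4 * \<bar>\<theta>\<bar> * \<bar>real_of_int (psi_poly k a (int N))\<bar>
      * \<bar>real_of_int (fdiff (psi_poly k a) (int N))\<bar>"
proof -
  have "psi_poly k a 0 = 0"
    unfolding psi_poly_def by (intro sum.neutral) auto
  then have "norm ((\<Sum>x\<in>{1..int N}. of_int (fdiff (psi_poly k a) (x - 1)) * e (\<theta> * of_int (psi_poly k a x)))
      - sum_upto (\<lambda>y. e (\<theta> * of_int y)) (psi_poly k a (int N)))
    \<le> 2 * pi * \<bar>\<theta>\<bar> * (\<Sum>x\<in>{1..int N}. (real_of_int (fdiff (psi_poly k a) (x - 1)))\<^sup>2)"
    by (rule weighted_sum_approx_sum_upto[OF _ norm_e_mult_of_int_diff_le])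
  also have "\<dots> \<le> 2 * pi * \<bar>\<theta>\<bar> * (5 * real k ^ 4 * \<bar>real_of_int (psi_poly k a (int N))\<bar>
      * \<bar>real_of_int (fdiff (psi_poly k a) (int N))\<bar>)"
    using sum_squared_fdiff_psi_poly_le[OF assms] by (intro mult_left_mono) auto
  finally show ?thesis
    by (simp add: mult_ac)
qed

theorem lemma2p3:
  fixes k :: nat
  shows "\<exists>C::real. \<forall>(N::nat) (a::nat \<Rightarrow> int) (\<theta>::real).
    N \<ge> 1 \<longrightarrow> (\<forall>i\<in>{1..k}. \<bar>real_of_int (a i)\<bar> \<le> ln (real N)) \<longrightarrow>
    norm ((\<Sum>x\<in>{1..int N}. of_int (fdiff (psi_poly k a) (x - 1)) * e (\<theta> * of_int (psi_poly k a x)))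
          - sum_upto (\<lambda>y. e (\<theta> * of_int y)) (psi_poly k a (int N)))
      \<le> C * \<bar>\<theta>\<bar> * \<bar>real_of_int (psi_poly k a (int N))\<bar> * \<bar>real_of_int (fdiff (psi_poly k a) (int N))\<bar>"
  using psi_poly_weighted_e_sum_approx by blast

end
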